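(* Let $f:\mathcal{X}\to\mathbb{R}^K$ be a classifier and let $g:\mathcal{X}\to[0,\sqrt{\pi/2}]$ be the local robustness score $g(x)=\sqrt{\pi/2}\cdot\max\{\sigma(f(x))_{y}-\max_{j\neq y}\sigma(f(x))_j,\,0\}$, where $y$ is the ground-truth label of $x$ and $\sigma$ is a sigmoid or temperature-scaled softmax activation with values in $[0,1]$. For each class $k\in\{1,\dots,K\}$, let $x_1^{(k)},\dots,x_{n_k}^{(k)}$ be $n_k\ge1$ i.i.d. samples from the class-conditional distribution of class $k$, let $\Omega_k=\mathbb{E}[g(x)\mid y=k]$ and $\hat{\Omega}_k=\frac{1}{n_k}\sum_{i=1}^{n_k} g(x_i^{(k)})$. Define the population and empirical Robustness Disparity Indices $\mathrm{RDI}=\max_k\Omega_k-\min_k\Omega_k$ and $\widehat{\mathrm{RDI}}=\max_k\hat{\Omega}_k-\min_k\hat{\Omega}_k$, and let $n_{\min}=\min_k n_k$. Then for every $\delta\in(0,1)$, with probability at least $1-\delta$, $$|\widehat{\mathrm{RDI}}-\mathrm{RDI}|\le 2\sqrt{\frac{\pi\log(2K/\delta)}{4n_{\min}}}.$$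
   Context: The per-class GREAT Score of class $k$ is the average of the local score $g$ over the samples whose ground-truth label is $k$; its population counterpart $\Omega_k$ is the expectation of $g$ under the class-conditional data distribution of class $k$. The Robustness Disparity Index (RDI) is the range (maximum minus minimum) of the per-class scores. *)

theory Defs
  imports "HOL-Probability.Probability"
begin

text \<open>Classes are indexed by 0..<K. Logit / score vectors are functions nat => real
  (only the entries below K are meaningful).\<close>

definition sigmoid_act :: "nat \<Rightarrow> (nat \<Rightarrow> real) \<Rightarrow> (nat \<Rightarrow> real)" where
  "sigmoid_act K v = (\<lambda>j. 1 / (1 + exp (- v j)))"

definition softmax_act :: "nat \<Rightarrow> real \<Rightarrow> (nat \<Rightarrow> real) \<Rightarrow> (nat \<Rightarrow> real)" where
  "softmax_act K T v = (\<lambda>j. exp (v j / T) / (\<Sum>l<K. exp (v l / T)))"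

definition gscore ::
  "nat \<Rightarrow> ((nat \<Rightarrow> real) \<Rightarrow> (nat \<Rightarrow> real)) \<Rightarrow> ('x \<Rightarrow> (nat \<Rightarrow> real)) \<Rightarrow> 'x \<Rightarrow> nat \<Rightarrow> real" where
  "gscore K \<sigma> f x y =
     sqrt (pi / 2) * max (\<sigma> (f x) y - Max ((\<lambda>j. \<sigma> (f x) j) ` ({..<K} - {y}))) 0"

definition Omega ::
  "nat \<Rightarrow> ((nat \<Rightarrow> real) \<Rightarrow> (nat \<Rightarrow> real)) \<Rightarrow> ('x \<Rightarrow> (nat \<Rightarrow> real)) \<Rightarrow> (nat \<Rightarrow> 'x measure) \<Rightarrow> nat \<Rightarrow> real" where
  "Omega K \<sigma> f D k = (\<integral>x. gscore K \<sigma> f x k \<partial>D k)"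

definition Omega_hat ::
  "nat \<Rightarrow> ((nat \<Rightarrow> real) \<Rightarrow> (nat \<Rightarrow> real)) \<Rightarrow> ('x \<Rightarrow> (nat \<Rightarrow> real)) \<Rightarrow> (nat \<Rightarrow> nat)
     \<Rightarrow> (nat \<Rightarrow> nat \<Rightarrow> 'a \<Rightarrow> 'x) \<Rightarrow> 'a \<Rightarrow> nat \<Rightarrow> real" where
  "Omega_hat K \<sigma> f n X \<omega> k = (\<Sum>i<n k. gscore K \<sigma> f (X k i \<omega>) k) / real (n k)"

definition RDI :: "nat \<Rightarrow> (nat \<Rightarrow> real) \<Rightarrow> real" where
  "RDI K s = Max (s ` {..<K}) - Min (s ` {..<K})"

end

theory Submission imports Defs begin

text \<open>Both activations take values in [0, 1], so every local score lies in [0, sqrt(pi/2)].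
  Hoeffding's inequality then bounds the probability that a per-class empirical score deviates
  from its mean by t by 2 exp(-4 n_k t^2 / pi), which for the chosen t is at most delta / K.
  By the union bound, with probability at least 1 - delta all K per-class scores are t-accurate
  at once, and since the range Max - Min is 2-Lipschitz in the sup norm, the RDI is then
  2t-accurate.\<close>

lemma sigmoid_act_bounds: "0 \<le> sigmoid_act K v j" "sigmoid_act K v j \<le> 1"
  by (simp_all add: sigmoid_act_def add_pos_pos)

lemma softmax_act_bounds:
  assumes "j < K"
  shows "0 \<le> softmax_act K T v j" "softmax_act K T v j \<le> 1"
proof -
  have le: "exp (v j / T) \<le> (\<Sum>l<K. exp (v l / T))"
    using assms by (intro member_le_sum) auto
  moreover have "0 < (\<Sum>l<K. exp (v l / T))"
    using le exp_gt_zero[of "v j / T"] by linarith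
  ultimately show "0 \<le> softmax_act K T v j" "softmax_act K T v j \<le> 1"
    by (simp_all add: softmax_act_def divide_le_eq)
qed

lemma gscore_nonneg: "0 \<le> gscore K \<sigma> f x k"
  by (simp add: gscore_def)

lemma gscore_le_sqrt_pi_half:
  assumes K2: "K \<ge> 2" and k: "k < K"
    and unit: "\<And>j. j < K \<Longrightarrow> 0 \<le> \<sigma> (f x) j \<and> \<sigma> (f x) j \<le> 1"
  shows "gscore K \<sigma> f x k \<le> sqrt (pi / 2)"
proof -
  let ?others = "(\<lambda>j. \<sigma> (f x) j) ` ({..<K} - {k})"
  define j where "j = (if k = 0 then 1 else 0 :: nat)"
  have j: "j < K" "j \<noteq> k"
    using K2 k by (auto simp: j_def)
  then have "\<sigma> (f x) j \<le> Max ?others"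
    by (intro Max_ge) auto
  then have "max (\<sigma> (f x) k - Max ?others) 0 \<le> 1"
    using unit[OF j(1)] unit[OF k] by linarith
  then show ?thesis
    unfolding gscore_def by (intro mult_left_le) auto
qed

lemma gscore_bounds_for_activation:
  assumes "K \<ge> 2" "k < K" and act: "\<sigma> = sigmoid_act K \<or> (\<exists>T>0. \<sigma> = softmax_act K T)"
  shows "gscore K \<sigma> f x k \<in> {0..sqrt (pi / 2)}"
proof -
  have unit: "0 \<le> \<sigma> (f x) j \<and> \<sigma> (f x) j \<le> 1" if "j < K" for j
    using act sigmoid_act_bounds softmax_act_bounds[OF that] by auto
  show ?thesis
    using gscore_nonneg gscore_le_sqrt_pi_half[where \<sigma>=\<sigma> and f=f and x=x, OF assms(1,2) unit] by simp
qed

lemma (in prob_space) empirical_mean_Hoeffding: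
  fixes g :: "'x \<Rightarrow> real" and X :: "nat \<Rightarrow> 'a \<Rightarrow> 'x"
  assumes n: "0 < n" and t: "0 \<le> t" and ab: "a < b"
    and g_meas: "g \<in> borel_measurable D" and g_bounds: "\<And>x. g x \<in> {a..b}"
    and X_meas: "\<And>i. i < n \<Longrightarrow> X i \<in> measurable M D"
    and X_distr: "\<And>i. i < n \<Longrightarrow> distr M D (X i) = D"
    and X_indep: "indep_vars (\<lambda>_. D) X {..<n}"
  shows "prob {\<omega> \<in> space M. t \<le> \<bar>(\<Sum>i<n. g (X i \<omega>)) / real n - (\<integral>x. g x \<partial>D)\<bar>}
           \<le> 2 * exp (- 2 * real n * t\<^sup>2 / (b - a)\<^sup>2)"
proof -
  define Z where "Z = (\<lambda>i \<omega>. g (X i \<omega>))"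
  have Z_meas: "Z i \<in> borel_measurable M" if "i < n" for i
    unfolding Z_def using measurable_comp[OF X_meas[OF that] g_meas] by (simp add: comp_def)
  have Z_distr: "distr M borel (Z i) = distr D borel g" if "i < n" for i
    using distr_distr[OF g_meas X_meas[OF that]] X_distr[OF that] by (simp add: Z_def comp_def)
  have mean: "expectation (\<lambda>\<omega>. g (X 0 \<omega>)) = (\<integral>x. g x \<partial>D)"
    using integral_distr[OF X_meas[OF n] g_meas] X_distr[OF n] by (simp add: Z_def)
  interpret Hoeffding_ineq_iid M "{..<n}" Z "Z 0" a b "expectation (Z 0)"
  proof unfold_locales
    show "indep_vars (\<lambda>_. borel) Z {..<n}"
      unfolding Z_def by (rule indep_vars_compose2[OF X_indep]) (use g_meas in simp)
  qed (use Z_meas Z_distr n g_bounds in \<open>auto simp: Z_def\<close>)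
  show ?thesis
    using Hoeffding_ineq_abs_ge'[OF t ab] n by (simp add: Z_def mean lessThan_empty_iff)
qed

lemma borel_measurable_Omega_hat:
  assumes g_meas: "(\<lambda>x. gscore K \<sigma> f x k) \<in> borel_measurable (D k)"
    and X_meas: "\<And>i. i < n k \<Longrightarrow> X k i \<in> measurable M (D k)"
  shows "(\<lambda>\<omega>. Omega_hat K \<sigma> f n X \<omega> k) \<in> borel_measurable M"
proof -
  have "(\<lambda>\<omega>. gscore K \<sigma> f (X k i \<omega>) k) \<in> borel_measurable M" if "i < n k" for i
    using measurable_comp[OF X_meas[OF that] g_meas] by (simp add: comp_def)
  then show ?thesis
    unfolding Omega_hat_def by (intro borel_measurable_divide borel_measurable_sum) auto
qed

lemma (in prob_space) Omega_hat_deviation_prob_le: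
  assumes K2: "K \<ge> 2" and k: "k < K" and t: "0 \<le> t"
    and act: "\<sigma> = sigmoid_act K \<or> (\<exists>T>0. \<sigma> = softmax_act K T)"
    and g_meas: "(\<lambda>x. gscore K \<sigma> f x k) \<in> borel_measurable (D k)"
    and n_pos: "n k \<ge> 1"
    and X_meas: "\<And>i. i < n k \<Longrightarrow> X k i \<in> measurable M (D k)"
    and X_distr: "\<And>i. i < n k \<Longrightarrow> distr M (D k) (X k i) = D k"
    and X_indep: "indep_vars (\<lambda>_. D k) (X k) {..<n k}"
  shows "prob {\<omega> \<in> space M. t \<le> \<bar>Omega_hat K \<sigma> f n X \<omega> k - Omega K \<sigma> f D k\<bar>}
           \<le> 2 * exp (- 4 * real (n k) * t\<^sup>2 / pi)"
proof -
  have "- 2 * real (n k) * t\<^sup>2 / (sqrt (pi / 2) - 0)\<^sup>2 = - 4 * real (n k) * t\<^sup>2 / pi"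
    by (simp add: field_simps)
  then show ?thesis
    using empirical_mean_Hoeffding[OF _ t _ g_meas
        gscore_bounds_for_activation[OF K2 k act] X_meas X_distr X_indep] n_pos
    by (simp add: Omega_hat_def Omega_def mult.assoc)
qed

lemma Hoeffding_tail_le_union_share:
  fixes K m n\<^sub>0 :: nat and \<delta> :: real
  assumes K: "0 < K" and \<delta>: "0 < \<delta>" "\<delta> \<le> 2 * real K" and n\<^sub>0: "0 < n\<^sub>0" "n\<^sub>0 \<le> m"
  shows "2 * exp (- 4 * real m * (sqrt (pi * ln (2 * real K / \<delta>) / (4 * real n\<^sub>0)))\<^sup>2 / pi)
           \<le> \<delta> / real K"
proof -
  define L where "L = ln (2 * real K / \<delta>)"
  have L: "0 \<le> L"
    unfolding L_def using K \<delta> by simp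
  have "- 4 * real m * (sqrt (pi * L / (4 * real n\<^sub>0)))\<^sup>2 / pi = - (real m / real n\<^sub>0) * L"
    using L n\<^sub>0 by (simp add: field_simps)
  also have "\<dots> \<le> - L"
    using L n\<^sub>0 by (simp add: field_simps mult_left_mono)
  finally have "2 * exp (- 4 * real m * (sqrt (pi * L / (4 * real n\<^sub>0)))\<^sup>2 / pi) \<le> 2 * exp (- L)"
    by simp
  also have "2 * exp (- L) = \<delta> / real K"
    unfolding L_def using K \<delta> by (simp add: exp_minus)
  finally show ?thesis
    unfolding L_def .
qed

lemma Max_image_diff_le:
  fixes a b :: "'i \<Rightarrow> 'b :: {linordered_ab_group_add, ordered_ab_group_add_abs}"
  assumes I: "finite I" "I \<noteq> {}" and close: "\<And>i. i \<in> I \<Longrightarrow> \<bar>a i - b i\<bar> \<le> t"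
  shows "\<bar>Max (a ` I) - Max (b ` I)\<bar> \<le> t"
proof -
  have one_side: "Max (c ` I) \<le> Max (d ` I) + t"
    if cd: "\<And>i. i \<in> I \<Longrightarrow> c i \<le> d i + t" for c d :: "'i \<Rightarrow> 'b"
  proof -
    have "c i \<le> Max (d ` I) + t" if "i \<in> I" for i
      using cd[OF that] Max_ge[OF finite_imageI[OF I(1)] imageI[OF that, of d]]
      by (meson add_right_mono order_trans)
    then show ?thesis
      using I by (simp add: Max_le_iff)
  qed
  have "Max (a ` I) \<le> Max (b ` I) + t" "Max (b ` I) \<le> Max (a ` I) + t"
    by (rule one_side; use close in \<open>fastforce simp: abs_le_iff algebra_simps\<close>)+
  then show ?thesis
    by (simp add: abs_le_iff algebra_simps)
qed

lemma Min_image_diff_le: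
  fixes a b :: "'i \<Rightarrow> 'b :: {linordered_ab_group_add, ordered_ab_group_add_abs}"
  assumes I: "finite I" "I \<noteq> {}" and close: "\<And>i. i \<in> I \<Longrightarrow> \<bar>a i - b i\<bar> \<le> t"
  shows "\<bar>Min (a ` I) - Min (b ` I)\<bar> \<le> t"
proof -
  have one_side: "Min (c ` I) \<le> Min (d ` I) + t"
    if cd: "\<And>i. i \<in> I \<Longrightarrow> c i \<le> d i + t" for c d :: "'i \<Rightarrow> 'b"
  proof -
    have "Min (c ` I) - t \<le> d i" if "i \<in> I" for i
      using cd[OF that] Min_le[OF finite_imageI[OF I(1)] imageI[OF that, of c]]
      by (simp add: algebra_simps)
    then have "Min (c ` I) - t \<le> Min (d ` I)"
      using I by (simp add: Min_ge_iff)
    then show ?thesis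
      by (simp add: algebra_simps)
  qed
  have "Min (a ` I) \<le> Min (b ` I) + t" "Min (b ` I) \<le> Min (a ` I) + t"
    by (rule one_side; use close in \<open>fastforce simp: abs_le_iff algebra_simps\<close>)+
  then show ?thesis
    by (simp add: abs_le_iff algebra_simps)
qed

lemma RDI_diff_le:
  assumes "0 < K" and close: "\<And>k. k < K \<Longrightarrow> \<bar>a k - b k\<bar> \<le> t"
  shows "\<bar>RDI K a - RDI K b\<bar> \<le> 2 * t"
proof -
  have "\<bar>Max (a ` {..<K}) - Max (b ` {..<K})\<bar> \<le> t" "\<bar>Min (a ` {..<K}) - Min (b ` {..<K})\<bar> \<le> t"
    using assms by (auto intro!: Max_image_diff_le Min_image_diff_le)
  then show ?thesis
    unfolding RDI_def by (simp add: abs_le_iff)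
qed

lemma (in prob_space) prob_superset_of_compl_UNION_ge:
  assumes "finite I" "B ` I \<subseteq> events" "G \<in> events" "space M - (\<Union>i\<in>I. B i) \<subseteq> G"
  shows "1 - (\<Sum>i\<in>I. prob (B i)) \<le> prob G"
proof -
  have "1 - (\<Sum>i\<in>I. prob (B i)) \<le> 1 - prob (\<Union>i\<in>I. B i)"
    using measure_UNION_le[OF assms(1)] assms(2) by auto
  also have "\<dots> = prob (space M - (\<Union>i\<in>I. B i))"
    using assms(1,2) by (subst prob_compl) (auto intro!: sets.finite_UN)
  also have "\<dots> \<le> prob G"
    using assms(3,4) by (rule finite_measure_mono[rotated])
  finally show ?thesis .
qed

lemma (in prob_space) prob_RDI_diff_le_ge:
  fixes Y :: "'a \<Rightarrow> nat \<Rightarrow> real"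
  assumes K: "0 < K" and Y_meas: "\<And>k. k < K \<Longrightarrow> (\<lambda>\<omega>. Y \<omega> k) \<in> borel_measurable M"
  shows "1 - (\<Sum>k<K. prob {\<omega> \<in> space M. t \<le> \<bar>Y \<omega> k - c k\<bar>})
           \<le> prob {\<omega> \<in> space M. \<bar>RDI K (Y \<omega>) - RDI K c\<bar> \<le> 2 * t}"
proof (rule prob_superset_of_compl_UNION_ge)
  show "(\<lambda>k. {\<omega> \<in> space M. t \<le> \<bar>Y \<omega> k - c k\<bar>}) ` {..<K} \<subseteq> events"
    using Y_meas by auto
  show "{\<omega> \<in> space M. \<bar>RDI K (Y \<omega>) - RDI K c\<bar> \<le> 2 * t} \<in> events"
    using Y_meas unfolding RDI_def by measurable
  show "space M - (\<Union>k\<in>{..<K}. {\<omega> \<in> space M. t \<le> \<bar>Y \<omega> k - c k\<bar>})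
          \<subseteq> {\<omega> \<in> space M. \<bar>RDI K (Y \<omega>) - RDI K c\<bar> \<le> 2 * t}"
  proof
    fix \<omega> assume \<omega>: "\<omega> \<in> space M - (\<Union>k\<in>{..<K}. {\<omega> \<in> space M. t \<le> \<bar>Y \<omega> k - c k\<bar>})"
    then have "\<bar>Y \<omega> k - c k\<bar> \<le> t" if "k < K" for k
      using that by force
    then show "\<omega> \<in> {\<omega> \<in> space M. \<bar>RDI K (Y \<omega>) - RDI K c\<bar> \<le> 2 * t}"
      using \<omega> RDI_diff_le[OF K] by simp
  qed
qed simp

theorem proposition2:
  fixes K :: nat and f :: "'x \<Rightarrow> (nat \<Rightarrow> real)" and \<sigma> :: "(nat \<Rightarrow> real) \<Rightarrow> (nat \<Rightarrow> real)"
    and D :: "nat \<Rightarrow> 'x measure" and M :: "'a measure"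
    and n :: "nat \<Rightarrow> nat" and X :: "nat \<Rightarrow> nat \<Rightarrow> 'a \<Rightarrow> 'x" and \<delta> :: real
  assumes K2: "K \<ge> 2"
    and act: "\<sigma> = sigmoid_act K \<or> (\<exists>T>0. \<sigma> = softmax_act K T)"
    and D_prob: "\<And>k. k < K \<Longrightarrow> prob_space (D k)"
    and g_meas: "\<And>k. k < K \<Longrightarrow> (\<lambda>x. gscore K \<sigma> f x k) \<in> borel_measurable (D k)"
    and M_prob: "prob_space M"
    and n_pos: "\<And>k. k < K \<Longrightarrow> n k \<ge> 1"
    and X_meas: "\<And>k i. k < K \<Longrightarrow> i < n k \<Longrightarrow> X k i \<in> measurable M (D k)"
    and X_distr: "\<And>k i. k < K \<Longrightarrow> i < n k \<Longrightarrow> distr M (D k) (X k i) = D k"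
    and X_indep: "\<And>k. k < K \<Longrightarrow> prob_space.indep_vars M (\<lambda>_. D k) (X k) {..<n k}"
    and \<delta>: "0 < \<delta>" "\<delta> < 1"
  shows "measure M {\<omega> \<in> space M.
           \<bar>RDI K (Omega_hat K \<sigma> f n X \<omega>) - RDI K (Omega K \<sigma> f D)\<bar>
             \<le> 2 * sqrt (pi * ln (2 * real K / \<delta>) / (4 * real (Min (n ` {..<K}))))}
         \<ge> 1 - \<delta>"
proof -
  interpret prob_space M by (rule M_prob)
  define n\<^sub>0 where "n\<^sub>0 = Min (n ` {..<K})"
  define t where "t = sqrt (pi * ln (2 * real K / \<delta>) / (4 * real n\<^sub>0))"
  have K: "0 < K" and \<delta>_le: "\<delta> \<le> 2 * real K"
    using K2 \<delta> by auto
  have n\<^sub>0: "0 < n\<^sub>0" "\<And>k. k < K \<Longrightarrow> n\<^sub>0 \<le> n k"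
    using K n_pos by (auto simp: n\<^sub>0_def Min_gr_iff Suc_le_eq lessThan_empty_iff)
  have t: "0 \<le> t"
    unfolding t_def using K \<delta> \<delta>_le n\<^sub>0(1) by simp
  have "prob {\<omega> \<in> space M. t \<le> \<bar>Omega_hat K \<sigma> f n X \<omega> k - Omega K \<sigma> f D k\<bar>} \<le> \<delta> / real K"
    if k: "k < K" for k
    using Omega_hat_deviation_prob_le[where n=n and X=X and D=D, OF K2 k t act g_meas[OF k]
        n_pos[OF k] X_meas[OF k] X_distr[OF k] X_indep[OF k]]
      Hoeffding_tail_le_union_share[OF K \<delta>(1) \<delta>_le n\<^sub>0(1) n\<^sub>0(2)[OF k]]
    unfolding t_def by simp
  then have "(\<Sum>k<K. prob {\<omega> \<in> space M. t \<le> \<bar>Omega_hat K \<sigma> f n X \<omega> k - Omega K \<sigma> f D k\<bar>}) \<le> \<delta>"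
    using sum_mono[where K="{..<K}" and g="\<lambda>_. \<delta> / real K"] K by fastforce
  moreover have "(\<lambda>\<omega>. Omega_hat K \<sigma> f n X \<omega> k) \<in> borel_measurable M" if "k < K" for k
    using that by (intro borel_measurable_Omega_hat[where D=D] g_meas X_meas)
  ultimately show ?thesis
    using prob_RDI_diff_le_ge[OF K, of "Omega_hat K \<sigma> f n X" t "Omega K \<sigma> f D"]
    unfolding t_def n\<^sub>0_def by simp
qed

end
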